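(* Let $D$ be a flagging monitor over the alphabet $\Sigma$ and $\varphi$ a co-safety LTL formula over propositions ${\cal P}$ with $\Sigma=2^{\cal P}$. For every infinite trace $\sigma$ and indices $i\le j$: if $\sigma_{i,j}\vdash D;\varphi$, then for all $k>j$, $\sigma_{i,k}\not\vdash D;\varphi$.
   Context: For an infinite trace $\sigma=\sigma_0\sigma_1\cdots$ over $\Sigma$ and $i\le j$, $\sigma_{i,j}=\sigma_i\cdots\sigma_j$. Flagging monitor: a tuple $D=\langle \Sigma, \mathbb{V}, \Theta, Q, \theta_0, q_0, F, \perp, \rightarrow\rangle$ ($\mathbb{V}$ typed variables, $\Theta$ valuations, $Q$ finite states, $\theta_0$ initial valuation, $q_0$ initial state, $F\subseteq Q\setminus\{q_0\}$ flagging states, $\perp$ sink, $\rightarrow$ deterministic transitions $q\xrightarrow{g\mapsto a}q'$ from $q\ne\perp$ with guard $g:\Sigma\times\Theta\to\{\mathit{true},\mathit{false}\}$ and action $a:\Sigma\times\Theta\to\Theta$). Semantics on configurations $(q,\theta)$ reading $E$: (1) if $q\notin F\cup\{\perp\}$ and a transition from $q$ has true guard on $(E,\theta)$, take it, updating the valuation to $a(E,\theta)$; (2) if $q\notin F\cup\{\perp\}$ and no guard holds, stay; (3) $\perp$ stays $\perp$; (4) a flagging state moves to $\perp$ (valuation unchanged). $\sigma_{i,j}\Vdash D$ iff the run from $(q_0,\theta_0)$ on $\sigma_i,\dots,\sigma_j$ ends in a state of $F$. Co-safety LTL: $\varphi ::= \mathit{tt}\mid \mathit{ff}\mid e\mid\neg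 e\mid \varphi\wedge\varphi\mid\varphi\vee\varphi\mid X\varphi\mid \varphi U\varphi$ with $e\in{\cal P}$. Finite-trace semantics for $i\le j<\infty$: $\sigma_{i,j}\vdash\mathit{tt}$ always, $\vdash\mathit{ff}$ never; $\sigma_{i,j}\vdash e$ iff $e\in\sigma_i$; $\sigma_{i,j}\vdash\neg e$ iff $e\notin\sigma_i$; $\wedge,\vee$ as usual; $\sigma_{i,j}\vdash X\varphi$ iff $j>i$ and $\sigma_{i+1,j}\vdash\varphi$; $\sigma_{i,j}\vdash\varphi U\psi$ iff there is $l$ with $i\le l\le j$, $\sigma_{l,j}\vdash\psi$ and $\sigma_{k,j}\vdash\varphi$ for all $i\le k<l$. Tight satisfaction: $\sigma_{i,j}\Vdash\varphi$ iff $\sigma_{i,j}\vdash\varphi$ and $\sigma_{i,k}\not\vdash\varphi$ for all $i\le k<j$. One step of a repeating trigger: $\sigma_{i,k}\vdash D;\varphi$ iff there is $j$ with $i\le j\le k$, $\sigma_{i,j}\Vdash D$ and $\sigma_{j,k}\Vdash\varphi$. *)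

theory Defs
  imports Main
begin

text \<open>Alphabet Sigma = 2^P, so letters are sets of propositions of type 'p.
  Valuations of the typed variables are abstracted as a type 'v.
  A transition q --(g |-> a)--> q' is a tuple (q, g, a, q').\<close>

type_synonym ('p,'v) guard = "'p set \<Rightarrow> 'v \<Rightarrow> bool"
type_synonym ('p,'v) action = "'p set \<Rightarrow> 'v \<Rightarrow> 'v"

record ('p,'q,'v) monitor =
  states :: "'q set"
  init_val :: "'v"
  init_st :: "'q"
  flag :: "'q set"
  sink :: "'q"
  trans :: "('q \<times> ('p,'v) guard \<times> ('p,'v) action \<times> 'q) set"

definition flagging_monitor :: "('p,'q,'v) monitor \<Rightarrow> bool" where
  "flagging_monitor D \<longleftrightarrow>
     finite (states D) \<and> init_st D \<in> states D \<and> sink D \<in> states D \<and>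
     flag D \<subseteq> states D - {init_st D} \<and> sink D \<notin> flag D \<and>
     (\<forall>(q,g,a,q') \<in> trans D. q \<in> states D \<and> q' \<in> states D \<and> q \<noteq> sink D) \<and>
     (\<forall>t1 \<in> trans D. \<forall>t2 \<in> trans D. \<forall>E \<theta>.
        fst t1 = fst t2 \<and> fst (snd t1) E \<theta> \<and> fst (snd t2) E \<theta> \<longrightarrow> t1 = t2)"

definition enabled :: "('p,'q,'v) monitor \<Rightarrow> 'p set \<Rightarrow> 'q \<Rightarrow> 'v
    \<Rightarrow> ('q \<times> ('p,'v) guard \<times> ('p,'v) action \<times> 'q) \<Rightarrow> bool" where
  "enabled D E q \<theta> t \<longleftrightarrow> t \<in> trans D \<and> fst t = q \<and> fst (snd t) E \<theta>"

definition mstep :: "('p,'q,'v) monitor \<Rightarrow> 'p set \<Rightarrow> 'q \<times> 'v \<Rightarrow> 'q \<times> 'v" where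
  "mstep D E c = (let q = fst c; \<theta> = snd c in
     if q = sink D then (q, \<theta>)
     else if q \<in> flag D then (sink D, \<theta>)
     else if (\<exists>t. enabled D E q \<theta> t)
       then (let t = (THE t. enabled D E q \<theta> t) in
             (snd (snd (snd t)), fst (snd (snd t)) E \<theta>))
     else (q, \<theta>))"

fun mrun :: "('p,'q,'v) monitor \<Rightarrow> (nat \<Rightarrow> 'p set) \<Rightarrow> nat \<Rightarrow> nat \<Rightarrow> 'q \<times> 'v" where
  "mrun D \<sigma> i 0 = (init_st D, init_val D)"
| "mrun D \<sigma> i (Suc n) = mstep D (\<sigma> (i + n)) (mrun D \<sigma> i n)"

text \<open>sigma_{i,j} tightly satisfies D (i \<le> j): run on sigma_i..sigma_j ends in F.\<close>
definition mon_tsat :: "(nat \<Rightarrow> 'p set) \<Rightarrow> nat \<Rightarrow> nat \<Rightarrow> ('p,'q,'v) monitor \<Rightarrow> bool" where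
  "mon_tsat \<sigma> i j D \<longleftrightarrow> i \<le> j \<and> fst (mrun D \<sigma> i (Suc (j - i))) \<in> flag D"

datatype 'p cltl = TT | FF | Prop 'p | NProp 'p
  | And "'p cltl" "'p cltl" | Or "'p cltl" "'p cltl"
  | Next "'p cltl" | Until "'p cltl" "'p cltl"

text \<open>Finite-trace semantics sigma_{i,j} |- phi (meaningful for i \<le> j).\<close>
fun lsat :: "(nat \<Rightarrow> 'p set) \<Rightarrow> nat \<Rightarrow> nat \<Rightarrow> 'p cltl \<Rightarrow> bool" where
  "lsat \<sigma> i j TT = True"
| "lsat \<sigma> i j FF = False"
| "lsat \<sigma> i j (Prop e) = (e \<in> \<sigma> i)"
| "lsat \<sigma> i j (NProp e) = (e \<notin> \<sigma> i)"
| "lsat \<sigma> i j (And \<phi> \<psi>) = (lsat \<sigma> i j \<phi> \<and> lsat \<sigma> i j \<psi>)"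
| "lsat \<sigma> i j (Or \<phi> \<psi>) = (lsat \<sigma> i j \<phi> \<or> lsat \<sigma> i j \<psi>)"
| "lsat \<sigma> i j (Next \<phi>) = (j > i \<and> lsat \<sigma> (Suc i) j \<phi>)"
| "lsat \<sigma> i j (Until \<phi> \<psi>) =
     (\<exists>l. i \<le> l \<and> l \<le> j \<and> lsat \<sigma> l j \<psi> \<and> (\<forall>k. i \<le> k \<and> k < l \<longrightarrow> lsat \<sigma> k j \<phi>))"

definition ltsat :: "(nat \<Rightarrow> 'p set) \<Rightarrow> nat \<Rightarrow> nat \<Rightarrow> 'p cltl \<Rightarrow> bool" where
  "ltsat \<sigma> i j \<phi> \<longleftrightarrow> lsat \<sigma> i j \<phi> \<and> (\<forall>k. i \<le> k \<and> k < j \<longrightarrow> \<not> lsat \<sigma> i k \<phi>)"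

text \<open>One step of a repeating trigger: sigma_{i,k} |- D;phi.\<close>
definition trig_sat :: "(nat \<Rightarrow> 'p set) \<Rightarrow> nat \<Rightarrow> nat \<Rightarrow> ('p,'q,'v) monitor \<Rightarrow> 'p cltl \<Rightarrow> bool" where
  "trig_sat \<sigma> i k D \<phi> \<longleftrightarrow>
     (\<exists>j. i \<le> j \<and> j \<le> k \<and> mon_tsat \<sigma> i j D \<and> ltsat \<sigma> j k \<phi>)"

end

theory Submission
  imports Defs
begin

(* The monitor leaves a flagging state for the sink at the next letter and stays there, so a
   run flags at most once: the end j of the monitored segment sigma_{i,j} is determined by i.
   Likewise a tight model sigma_{j,k} of phi determines k, since a longer tight model would
   have the shorter one as a satisfying prefix. Hence D;phi holds for at most one k. *)

lemma mrun_sink_after_flag: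
  assumes "fst (mrun D \<sigma> i n) \<in> flag D"
  shows "fst (mrun D \<sigma> i (Suc n + m)) = sink D"
proof (induction m)
  case 0
  show ?case using assms by (simp add: mstep_def Let_def)
next
  case (Suc m)
  then show ?case by (simp add: mstep_def Let_def)
qed

lemma mon_tsat_not_later:
  assumes "sink D \<notin> flag D" and "mon_tsat \<sigma> i j D" and "j < k"
  shows "\<not> mon_tsat \<sigma> i k D"
proof
  assume "mon_tsat \<sigma> i k D"
  have "i \<le> j" and flagged: "fst (mrun D \<sigma> i (Suc (j - i))) \<in> flag D"
    using assms(2) by (simp_all add: mon_tsat_def del: mrun.simps)
  with \<open>j < k\<close> have "Suc (Suc (j - i)) + (k - j - 1) = Suc (k - i)"
    by arith
  then have "fst (mrun D \<sigma> i (Suc (k - i))) = sink D"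
    using mrun_sink_after_flag[OF flagged, of "k - j - 1"] by (simp only:)
  with assms(1) \<open>mon_tsat \<sigma> i k D\<close> show False
    by (simp add: mon_tsat_def del: mrun.simps)
qed

lemma mon_tsat_unique:
  assumes "sink D \<notin> flag D" and "mon_tsat \<sigma> i j D" and "mon_tsat \<sigma> i j' D"
  shows "j = j'"
  using mon_tsat_not_later[OF assms(1)] assms(2,3) by (metis linorder_neqE_nat)

lemma ltsat_unique:
  assumes "i \<le> k" "i \<le> k'" and "ltsat \<sigma> i k \<phi>" and "ltsat \<sigma> i k' \<phi>"
  shows "k = k'"
  using assms unfolding ltsat_def by (metis linorder_neqE_nat)

theorem proposition3:
  fixes D :: "('p,'q,'v) monitor" and \<phi> :: "'p cltl" and \<sigma> :: "nat \<Rightarrow> 'p set"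
    and i j :: nat
  assumes "flagging_monitor D"
    and "i \<le> j"
    and "trig_sat \<sigma> i j D \<phi>"
  shows "\<forall>k>j. \<not> trig_sat \<sigma> i k D \<phi>"
proof (intro allI impI notI)
  fix k assume "k > j" and "trig_sat \<sigma> i k D \<phi>"
  then obtain m' where m': "m' \<le> k" "mon_tsat \<sigma> i m' D" "ltsat \<sigma> m' k \<phi>"
    by (auto simp: trig_sat_def)
  obtain m where m: "m \<le> j" "mon_tsat \<sigma> i m D" "ltsat \<sigma> m j \<phi>"
    using assms(3) by (auto simp: trig_sat_def)
  have "sink D \<notin> flag D"
    using assms(1) by (simp add: flagging_monitor_def)
  then have "m = m'"
    using m(2) m'(2) by (rule mon_tsat_unique)
  then have "j = k"
    using ltsat_unique m m' by blast
  with \<open>k > j\<close> show False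
    by simp
qed

end
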